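(* Assume $y$ is $q$-full. Let $(m_i)_{i\in\mathbb{Z}/b\mathbb{Z}}$ and $(n_i)_{i\in\mathbb{Z}/b\mathbb{Z}}$ be tuples of positive integers with $m_{i-1}\le p\,m_i$ and $n_{i-1}\le p\,n_i$ for all $i$. If $\sum_{i\in\mathbb{Z}/b\mathbb{Z}}y_i(pm_i-m_{i-1})=\sum_{i\in\mathbb{Z}/b\mathbb{Z}}y_i(pn_i-n_{i-1})$, then $m_i=n_i$ for all $i$.
   Context: Let $q=p^b$, $p$ prime. Write $y\in\mathbb{Z}_p$ as $y=\sum_{i=1}^b p^{i-1}y_i$, $y_i=\sum_{j\ge0}y_{i,j}q^j$, $0\le y_{i,j}<p$; $y$ is $q$-full if no $y_i$ is a non-negative integer. Indices $i$ are in $\mathbb{Z}/b\mathbb{Z}$. For $n\ge1$, $d_i(n)=p^{i-1}q^w$ where $w\ge0$ is the unique integer with $\sum_{j=0}^{w-1}y_{i,j}<n\le\sum_{j=0}^{w}y_{i,j}$; $y_i(m)=\sum_{n=1}^m d_i(n)$ for $m\in\mathbb{Z}$ (zero for $m\le0$). (In the paper's language, the tuples are coordinates of $p$-bounded rotational $b$-cycles of $\mathbb{Z}/b\mathbb{Z}\times\mathbb{Z}_{>0}$ and the sums are their $R$-values.) *)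

theory Defs
  imports "HOL-Computational_Algebra.Primes"
begin

text \<open>A p-adic integer y is represented by its p-adic digit sequence
  y :: nat => nat (y = sum_k y k * p^k, 0 <= y k < p).  With q = p^b and
  y = sum_{i=1..b} p^(i-1) y_i, y_i = sum_j y_{i,j} q^j, the digit y_{i,j}
  is the p-adic digit of y at position (i-1) + b*j.  Indices of Z/bZ are
  represented by 1..b.\<close>

definition ydig :: "nat \<Rightarrow> (nat \<Rightarrow> nat) \<Rightarrow> nat \<Rightarrow> nat \<Rightarrow> nat" where
  "ydig b y i j = y ((i - 1) + b * j)"

definition yi_nonneg_int :: "nat \<Rightarrow> (nat \<Rightarrow> nat) \<Rightarrow> nat \<Rightarrow> bool" where
  "yi_nonneg_int b y i \<longleftrightarrow> (\<exists>N. \<forall>j\<ge>N. ydig b y i j = 0)"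

definition q_full :: "nat \<Rightarrow> (nat \<Rightarrow> nat) \<Rightarrow> bool" where
  "q_full b y \<longleftrightarrow> (\<forall>i\<in>{1..b}. \<not> yi_nonneg_int b y i)"

definition cprev :: "nat \<Rightarrow> nat \<Rightarrow> nat" where
  "cprev b i = (if i = 1 then b else i - 1)"

definition dval :: "nat \<Rightarrow> nat \<Rightarrow> (nat \<Rightarrow> nat) \<Rightarrow> nat \<Rightarrow> nat \<Rightarrow> int" where
  "dval p b y i n =
     (let w = (THE w. (\<Sum>j<w. ydig b y i j) < n \<and> n \<le> (\<Sum>j<Suc w. ydig b y i j))
      in int p ^ (i - 1) * (int p ^ b) ^ w)"

text \<open>y_i(m) = sum_{n=1}^m d_i(n), zero for m <= 0\<close>
definition Rval :: "nat \<Rightarrow> nat \<Rightarrow> (nat \<Rightarrow> nat) \<Rightarrow> nat \<Rightarrow> int \<Rightarrow> int" where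
  "Rval p b y i m = (\<Sum>n\<in>{1..m}. dval p b y i (nat n))"

end

theory Submission
  imports Defs "HOL-Library.Infinite_Set"
begin

text \<open>Let a = (y_{i,w})_w be the q-adic digits of y_i, and say that n \<ge> 1 has level w
  when d_i(n) = p^(i-1) q^w, i.e. when n falls into the w-th block of a; q-fullness
  guarantees that every n has a level.  Thus y_i(k) = \<Sum>_w c_w p^((i-1)+bw), where
  c_w \<le> y_{i,w} < p counts the n \<le> k of level w, and \<Sum>_w c_w = k.  Distinct pairs
  (i, w) give distinct positions (i-1)+bw, so \<Sum>_i y_i(k_i) is written in base p with
  the digits c_{i,w}, and these determine every k_i.  For k_i = p m_i - m_{i-1} this
  yields p d_i = d_{i-1} around the cycle for d = m - n, so the largest |d_i| is at
  least p times itself, hence zero.\<close>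

definition level :: "(nat \<Rightarrow> nat) \<Rightarrow> nat \<Rightarrow> nat" where
  "level a n = (THE w. (\<Sum>j<w. a j) < n \<and> n \<le> (\<Sum>j<Suc w. a j))"

definition level_count :: "(nat \<Rightarrow> nat) \<Rightarrow> nat \<Rightarrow> nat \<Rightarrow> nat" where
  "level_count a k w = min (a w) (k - (\<Sum>j<w. a j))"

lemma eventually_partial_sums_ge:
  fixes a :: "nat \<Rightarrow> nat"
  assumes "\<forall>N. \<exists>j\<ge>N. a j \<noteq> 0"
  shows "eventually (\<lambda>W. M \<le> (\<Sum>j<W. a j)) sequentially"
proof (induction M)
  case 0
  then show ?case by simp
next
  case (Suc M)
  then obtain N where N: "\<And>W. W \<ge> N \<Longrightarrow> M \<le> (\<Sum>j<W. a j)"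
    by (auto simp: eventually_sequentially)
  obtain j where j: "j \<ge> N" "a j \<noteq> 0"
    using assms by blast
  have "Suc M \<le> (\<Sum>j<W. a j)" if "W \<ge> Suc j" for W
  proof -
    have "Suc M \<le> (\<Sum>j<Suc j. a j)"
      using N[OF j(1)] j(2) by simp
    also have "\<dots> \<le> (\<Sum>j<W. a j)"
      using that by (intro sum_mono2) auto
    finally show ?thesis .
  qed
  then show ?case
    by (auto simp: eventually_sequentially)
qed

lemma level_eqI:
  assumes "(\<Sum>j<w. a j) < n" and "n \<le> (\<Sum>j<Suc w. a j)"
  shows "level a n = w"
  unfolding level_def
proof (rule the_equality)
  fix v
  assume v: "(\<Sum>j<v. a j) < n \<and> n \<le> (\<Sum>j<Suc v. a j)"
  have "\<not> Suc v \<le> w" and "\<not> Suc w \<le> v"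
    using sum_mono2[of "{..<w}" "{..<Suc v}" a] sum_mono2[of "{..<v}" "{..<Suc w}" a] assms v
    by auto
  then show "v = w" by simp
qed (use assms in blast)

lemma level_bounds:
  assumes "\<forall>N. \<exists>j\<ge>N. a j \<noteq> 0" and "n \<ge> 1"
  shows "(\<Sum>j<level a n. a j) < n" and "n \<le> (\<Sum>j<Suc (level a n). a j)"
proof -
  obtain W where "n \<le> (\<Sum>j<W. a j)"
    using eventually_partial_sums_ge[OF assms(1)] by (auto simp: eventually_sequentially)
  then obtain w where w: "\<not> n \<le> (\<Sum>j<w. a j)" "n \<le> (\<Sum>j<Suc w. a j)"
    using ex_least_nat_less[of "\<lambda>w. n \<le> (\<Sum>j<w. a j)"] \<open>n \<ge> 1\<close> by auto
  then have "level a n = w"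
    by (intro level_eqI) auto
  then show "(\<Sum>j<level a n. a j) < n" and "n \<le> (\<Sum>j<Suc (level a n). a j)"
    using w by auto
qed

lemma level_count_Suc:
  assumes "\<forall>N. \<exists>j\<ge>N. a j \<noteq> 0"
  shows "level_count a (Suc k) w = level_count a k w + (if w = level a (Suc k) then 1 else 0)"
proof -
  have "(\<Sum>j<w. a j) \<le> k \<and> k < (\<Sum>j<w. a j) + a w \<longleftrightarrow> w = level a (Suc k)"
    using level_eqI[of a w "Suc k"] level_bounds[OF assms, of "Suc k"] by auto
  then show ?thesis
    unfolding level_count_def by auto
qed

lemma sum_level_count: "(\<Sum>w<W. level_count a k w) = min k (\<Sum>j<W. a j)"
  by (induction W) (auto simp: level_count_def)

lemma dval_eq_level: "dval p b y i n = int (p ^ (i - 1 + b * level (ydig b y i) n))"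
  unfolding dval_def level_def Let_def by (simp add: power_add power_mult)

lemma Rval_Suc: "Rval p b y i (int (Suc k)) = Rval p b y i (int k) + dval p b y i (Suc k)"
proof -
  have "{1..int (Suc k)} = insert (1 + int k) {1..int k}"
    using atLeastAtMostPlus1_int_conv[of 1 "int k"] by simp
  moreover have "nat (1 + int k) = Suc k" by simp
  ultimately show ?thesis
    unfolding Rval_def by simp
qed

lemma Rval_base_p_expansion:
  assumes "\<not> yi_nonneg_int b y i" and "k \<le> (\<Sum>j<W. ydig b y i j)"
  shows "Rval p b y i (int k)
    = int (\<Sum>w<W. level_count (ydig b y i) k w * p ^ (i - 1 + b * w))"
  using assms(2)
proof (induction k)
  case 0
  then show ?case by (simp add: Rval_def level_count_def)
next
  case (Suc k)
  let ?a = "ydig b y i" and ?w = "level (ydig b y i) (Suc k)"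
  have nz: "\<forall>N. \<exists>j\<ge>N. ?a j \<noteq> 0"
    using assms(1) unfolding yi_nonneg_int_def by blast
  have "\<not> W \<le> ?w"
    using level_bounds(1)[OF nz, of "Suc k"] sum_mono2[of "{..<?w}" "{..<W}" ?a] Suc.prems
    by auto
  have "(\<Sum>w<W. level_count ?a (Suc k) w * p ^ (i - 1 + b * w))
      = (\<Sum>w<W. level_count ?a k w * p ^ (i - 1 + b * w)
           + (if w = ?w then p ^ (i - 1 + b * w) else 0))"
    by (intro sum.cong) (auto simp: level_count_Suc[OF nz])
  also have "\<dots> = (\<Sum>w<W. level_count ?a k w * p ^ (i - 1 + b * w)) + p ^ (i - 1 + b * ?w)"
    using \<open>\<not> W \<le> ?w\<close> by (simp add: sum.distrib)
  finally show ?case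
    unfolding Rval_Suc dval_eq_level using Suc by simp
qed

lemma sum_digits_less_power:
  fixes D :: "nat \<Rightarrow> nat"
  assumes "\<forall>t<N. D t < p"
  shows "(\<Sum>t<N. D t * p ^ t) < p ^ N"
  using assms
proof (induction N)
  case 0
  then show ?case by simp
next
  case (Suc N)
  then have "(\<Sum>t<Suc N. D t * p ^ t) < (D N + 1) * p ^ N"
    by simp
  also have "\<dots> \<le> p * p ^ N"
    using Suc.prems by (intro mult_le_mono1) auto
  finally show ?case by simp
qed

lemma base_digits_unique:
  fixes D D' :: "nat \<Rightarrow> nat"
  assumes "\<forall>t<N. D t < p \<and> D' t < p"
    and "(\<Sum>t<N. D t * p ^ t) = (\<Sum>t<N. D' t * p ^ t)"
  shows "\<forall>t<N. D t = D' t"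
  using assms
proof (induction N)
  case 0
  then show ?case by simp
next
  case (Suc N)
  let ?S = "\<Sum>t<N. D t * p ^ t" and ?S' = "\<Sum>t<N. D' t * p ^ t"
  have low: "?S < p ^ N" "?S' < p ^ N"
    using sum_digits_less_power[of N D p] sum_digits_less_power[of N D' p] Suc.prems(1) by auto
  have eq: "?S + D N * p ^ N = ?S' + D' N * p ^ N"
    using Suc.prems(2) by simp
  have "p ^ N > 0"
    using low by linarith
  then have top: "D N = D' N"
    using arg_cong[OF eq, of "\<lambda>x. x div p ^ N"] low by simp
  with eq have "?S = ?S'" by simp
  with Suc.IH Suc.prems(1) top show ?case
    using less_Suc_eq by auto
qed

lemma base_digits_unique_on:
  fixes D D' :: "'a \<Rightarrow> nat" and e :: "'a \<Rightarrow> nat"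
  assumes "finite A" and inj: "inj_on e A" and "\<forall>x\<in>A. D x < p \<and> D' x < p"
    and "(\<Sum>x\<in>A. D x * p ^ e x) = (\<Sum>x\<in>A. D' x * p ^ e x)"
  shows "\<forall>x\<in>A. D x = D' x"
proof -
  obtain N where N: "e ` A \<subseteq> {..<N}"
    using finite_nat_bounded finite_imageI[OF assms(1)] by blast
  define ext where "ext F t = (if t \<in> e ` A then F (the_inv_into A e t) else 0)"
    for F :: "'a \<Rightarrow> nat" and t
  have ext_at: "ext F (e x) = F x" if "x \<in> A" for F x
    using the_inv_into_f_f[OF inj that] that by (simp add: ext_def)
  have sum_ext: "(\<Sum>t<N. ext F t * p ^ t) = (\<Sum>x\<in>A. F x * p ^ e x)" for F
  proof -
    have "(\<Sum>t<N. ext F t * p ^ t) = (\<Sum>t\<in>e ` A. ext F t * p ^ t)"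
      using N by (intro sum.mono_neutral_right) (auto simp: ext_def)
    also have "\<dots> = (\<Sum>x\<in>A. ext F (e x) * p ^ e x)"
      by (rule sum.reindex[OF inj, unfolded comp_def])
    also have "\<dots> = (\<Sum>x\<in>A. F x * p ^ e x)"
      by (intro sum.cong) (simp_all add: ext_at)
    finally show ?thesis .
  qed
  have ext_less: "ext F t < p" if "\<forall>x\<in>A. F x < p" and "A \<noteq> {}" for F t
  proof (cases "t \<in> e ` A")
    case True
    then show ?thesis
      using that(1) the_inv_into_into[OF inj True order.refl] by (simp add: ext_def)
  next
    case False
    then show ?thesis
      using that by (auto simp: ext_def)
  qed
  have "\<forall>t<N. ext D t = ext D' t" if "A \<noteq> {}"
    using assms(3,4) ext_less[OF _ that]
    by (intro base_digits_unique[of N _ p]) (simp_all add: sum_ext)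
  then show ?thesis
    using N ext_at by (metis empty_iff image_subset_iff lessThan_iff)
qed

lemma inj_on_digit_position:
  fixes b :: nat
  assumes "b > 0"
  shows "inj_on (\<lambda>(i, w). i - 1 + b * w) ({1..b} \<times> UNIV)"
proof (rule inj_onI, clarify)
  fix i w i' w'
  assume "i \<in> {1..b}" "i' \<in> {1..b}" and eq: "i - 1 + b * w = i' - 1 + b * w'"
  have "i - 1 < b" "i' - 1 < b"
    using \<open>i \<in> {1..b}\<close> \<open>i' \<in> {1..b}\<close> by auto
  then have "i - 1 = i' - 1" "w = w'"
    using arg_cong[OF eq, of "\<lambda>x. x mod b"] arg_cong[OF eq, of "\<lambda>x. x div b"] assms by simp_all
  then show "i = i' \<and> w = w'"
    using \<open>i \<in> {1..b}\<close> \<open>i' \<in> {1..b}\<close> by auto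
qed

lemma Rval_sum_base_p_expansion:
  assumes "q_full b y" and "\<forall>i\<in>{1..b}. k i \<le> (\<Sum>j<W. ydig b y i j)"
  shows "(\<Sum>i=1..b. Rval p b y i (int (k i)))
    = int (\<Sum>i=1..b. \<Sum>w<W. level_count (ydig b y i) (k i) w * p ^ (i - 1 + b * w))"
  unfolding of_nat_sum[of _ "{1..b}"]
proof (intro sum.cong)
  fix i
  assume i: "i \<in> {1..b}"
  then have "\<not> yi_nonneg_int b y i"
    using assms(1) by (simp add: q_full_def)
  then show "Rval p b y i (int (k i))
      = int (\<Sum>w<W. level_count (ydig b y i) (k i) w * p ^ (i - 1 + b * w))"
    by (rule Rval_base_p_expansion) (use assms(2) i in blast)
qed simp

lemma Rval_sum_inj:
  fixes k k' :: "nat \<Rightarrow> nat"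
  assumes digits: "\<forall>j. y j < p" and full: "q_full b y"
    and eq: "(\<Sum>i=1..b. Rval p b y i (int (k i))) = (\<Sum>i=1..b. Rval p b y i (int (k' i)))"
    and i: "i \<in> {1..b}"
  shows "k i = k' i"
proof -
  have "\<forall>N. \<exists>j\<ge>N. ydig b y i j \<noteq> 0" if "i \<in> {1..b}" for i
    using full that unfolding q_full_def yi_nonneg_int_def by blast
  then have "eventually (\<lambda>W. \<forall>i\<in>{1..b}.
      k i \<le> (\<Sum>j<W. ydig b y i j) \<and> k' i \<le> (\<Sum>j<W. ydig b y i j)) sequentially"
    by (intro eventually_ball_finite ballI eventually_conj eventually_partial_sums_ge) auto
  then obtain W where W: "\<forall>i\<in>{1..b}. k i \<le> (\<Sum>j<W. ydig b y i j)"
      "\<forall>i\<in>{1..b}. k' i \<le> (\<Sum>j<W. ydig b y i j)"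
    by (auto simp: eventually_sequentially)
  define A where "A = {1..b} \<times> {..<W}"
  define e where "e = (\<lambda>(i, w). i - 1 + b * w)"
  define D where "D \<kappa> = (\<lambda>(i, w). level_count (ydig b y i) (\<kappa> i) w)" for \<kappa> :: "nat \<Rightarrow> nat"
  have sum_digits: "(\<Sum>i=1..b. Rval p b y i (int (\<kappa> i))) = int (\<Sum>x\<in>A. D \<kappa> x * p ^ e x)"
    if "\<forall>i\<in>{1..b}. \<kappa> i \<le> (\<Sum>j<W. ydig b y i j)" for \<kappa>
    using Rval_sum_base_p_expansion[OF full that, of p]
    by (simp only: A_def D_def e_def sum.cartesian_product' prod.case)
  have "\<forall>x\<in>A. D k x = D k' x"
  proof (rule base_digits_unique_on)
    show "inj_on e A"
      using inj_on_digit_position[of b] i unfolding A_def e_def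
      by (auto intro: inj_on_subset)
    have "D \<kappa> (j, w) < p" for \<kappa> j w
      using digits by (simp add: D_def level_count_def ydig_def min.strict_coboundedI1)
    then show "\<forall>x\<in>A. D k x < p \<and> D k' x < p"
      by auto
    have "int (\<Sum>x\<in>A. D k x * p ^ e x) = int (\<Sum>x\<in>A. D k' x * p ^ e x)"
      using eq sum_digits[OF W(1)] sum_digits[OF W(2)] by argo
    then show "(\<Sum>x\<in>A. D k x * p ^ e x) = (\<Sum>x\<in>A. D k' x * p ^ e x)"
      by (simp only: of_nat_eq_iff)
  qed (simp add: A_def)
  then have "(\<Sum>w<W. level_count (ydig b y i) (k i) w) = (\<Sum>w<W. level_count (ydig b y i) (k' i) w)"
    using i by (intro sum.cong) (auto simp: A_def D_def)
  then show ?thesis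
    using W i by (simp add: sum_level_count min_absorb1)
qed

lemma zero_if_scaled_along_self_map:
  fixes d :: "'a \<Rightarrow> int" and p :: int
  assumes "finite I" and "\<sigma> ` I \<subseteq> I" and "p \<ge> 2"
    and scaled: "\<forall>i\<in>I. p * d i = d (\<sigma> i)" and "i \<in> I"
  shows "d i = 0"
proof -
  define M where "M = Max ((\<lambda>i. \<bar>d i\<bar>) ` I)"
  have le_M: "\<bar>d j\<bar> \<le> M" if "j \<in> I" for j
    using assms(1) that unfolding M_def by simp
  have "M \<in> (\<lambda>i. \<bar>d i\<bar>) ` I"
    unfolding M_def using assms(1,5) by (intro Max_in) auto
  then obtain i0 where i0: "i0 \<in> I" "\<bar>d i0\<bar> = M"
    by blast
  have "p * M = \<bar>p * d i0\<bar>"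
    using i0(2) assms(3) by (simp add: abs_mult)
  also have "\<dots> = \<bar>d (\<sigma> i0)\<bar>"
    using scaled i0(1) by simp
  also have "\<dots> \<le> M"
    using le_M assms(2) i0(1) by blast
  finally have "p * M \<le> M" .
  moreover have "2 * M \<le> p * M"
    using i0(2) assms(3) by (intro mult_right_mono) auto
  ultimately have "M = 0"
    using i0(2) by linarith
  then show ?thesis
    using le_M[OF assms(5)] by simp
qed

lemma cprev_in_range: "i \<in> {1..b} \<Longrightarrow> cprev b i \<in> {1..b}"
  by (auto simp: cprev_def)

theorem lemma6p22:
  fixes p b :: nat and y :: "nat \<Rightarrow> nat" and m n :: "nat \<Rightarrow> int"
  assumes "prime p" and "b \<ge> 1"
    and "\<forall>k. y k < p"
    and "q_full b y"
    and "\<forall>i\<in>{1..b}. m i > 0 \<and> n i > 0"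
    and "\<forall>i\<in>{1..b}. m (cprev b i) \<le> int p * m i"
    and "\<forall>i\<in>{1..b}. n (cprev b i) \<le> int p * n i"
    and "(\<Sum>i=1..b. Rval p b y i (int p * m i - m (cprev b i)))
       = (\<Sum>i=1..b. Rval p b y i (int p * n i - n (cprev b i)))"
  shows "\<forall>i\<in>{1..b}. m i = n i"
proof
  fix i assume i: "i \<in> {1..b}"
  define k where "k j = nat (int p * m j - m (cprev b j))" for j
  define k' where "k' j = nat (int p * n j - n (cprev b j))" for j
  have k: "int (k j) = int p * m j - m (cprev b j)" "int (k' j) = int p * n j - n (cprev b j)"
    if "j \<in> {1..b}" for j
    using assms(6,7) that by (auto simp: k_def k'_def)
  have "(\<Sum>j=1..b. Rval p b y j (int (k j))) = (\<Sum>j=1..b. Rval p b y j (int (k' j)))"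
    using assms(8) k by simp
  then have "k j = k' j" if "j \<in> {1..b}" for j
    using Rval_sum_inj assms(3,4) that by blast
  then have "\<forall>j\<in>{1..b}. int p * (m j - n j) = m (cprev b j) - n (cprev b j)"
    using k by (auto simp: algebra_simps)
  moreover have "int p \<ge> 2"
    using prime_ge_2_nat[OF assms(1)] by simp
  ultimately have "m i - n i = 0"
    using zero_if_scaled_along_self_map[of "{1..b}" "cprev b" "int p" "\<lambda>j. m j - n j"] i cprev_in_range
    by blast
  then show "m i = n i" by simp
qed

end
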